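(* Let $T_1,T_2$ be tables joined on column $J$ with frequencies $a_v,b_v$ ($v\in\mathcal U$), let $\epsilon_1,\epsilon_2\in(0,1]$ and $p\in[\max\{\epsilon_1,\epsilon_2\},1]$. If $S_1=\mathrm{UBS}_{p,\epsilon_1/p}(T_1,J)$ and $S_2=\mathrm{UBS}_{p,\epsilon_2/p}(T_2,J)$ and $\hat J_{\mathrm{count}}=\frac{p}{\epsilon_1\epsilon_2}|S_1\bowtie_J S_2|$, then $$\mathrm{Var}[\hat J_{\mathrm{count}}] = \Big(\frac1p-1\Big)\gamma_{2,2} + \Big(\frac1{\epsilon_2}-\frac1p\Big)\gamma_{2,1} + \Big(\frac1{\epsilon_1}-\frac1p\Big)\gamma_{1,2} + \Big(\frac{p}{\epsilon_1\epsilon_2}-\frac1{\epsilon_1}-\frac1{\epsilon_2}+\frac1p\Big)\gamma_{1,1},$$ where $\gamma_{i,j}=\sum_{v\in\mathcal U}a_v^ib_v^j$.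
   Context: $T_1,T_2$ are finite multisets of tuples with a join attribute $J$ taking values in a finite set $\mathcal U$; $a_v$ (resp. $b_v$) is the number of tuples of $T_1$ (resp. $T_2$) with $J$-value $v$. $S_1\bowtie_J S_2$ is the set of pairs $(t_1,t_2)\in S_1\times S_2$ with $t_1.J=t_2.J$. $\mathrm{UBS}_{p,q}(T,J)$: given a hash function $h:\mathcal U\to[0,1]$, each tuple $t\in T$ with $h(t.J)<p$ is included independently with probability $q$; others are excluded. The values $h(v)$ are independent uniform on $[0,1]$, the same $h$ is used for both tables, and the Bernoulli coins are independent across all tuples and independent of $h$. (Note $\hat J_{\mathrm{count}}=|S_1\bowtie_J S_2|/(p q_1 q_2)$ with $q_i=\epsilon_i/p$.) *)

theory Defs
  imports "HOL-Probability.Probability"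
begin

text \<open>A table is a finite family of tuples \<open>T :: 'i \<Rightarrow> 't\<close> indexed by a finite
  set \<open>I\<close> of tuple occurrences (so duplicate tuples of the multiset are distinct
  occurrences); \<open>J :: 't \<Rightarrow> 'u\<close> extracts the join attribute.\<close>

definition freq :: "'i set \<Rightarrow> ('i \<Rightarrow> 't) \<Rightarrow> ('t \<Rightarrow> 'u) \<Rightarrow> 'u \<Rightarrow> nat" where
  "freq I T J v = card {i \<in> I. J (T i) = v}"

definition UBS :: "real \<Rightarrow> ('u \<Rightarrow> real) \<Rightarrow> ('i \<Rightarrow> bool) \<Rightarrow> 'i set \<Rightarrow> ('i \<Rightarrow> 't) \<Rightarrow> ('t \<Rightarrow> 'u) \<Rightarrow> 'i set" where
  "UBS p h c I T J = {i \<in> I. h (J (T i)) < p \<and> c i}"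

definition join :: "'i set \<Rightarrow> ('i \<Rightarrow> 't) \<Rightarrow> 'k set \<Rightarrow> ('k \<Rightarrow> 't) \<Rightarrow> ('t \<Rightarrow> 'u) \<Rightarrow> ('i \<times> 'k) set" where
  "join S1 T1 S2 T2 J = {(i, k) \<in> S1 \<times> S2. J (T1 i) = J (T2 k)}"

text \<open>Probability space: independent uniform hash values on \<open>[0,1]\<close> for each \<open>v \<in> U\<close>,
  and independent Bernoulli(q1) / Bernoulli(q2) coins for the tuples of \<open>T1\<close> / \<open>T2\<close>.\<close>
definition sample_space ::
  "'u set \<Rightarrow> 'i set \<Rightarrow> real \<Rightarrow> 'k set \<Rightarrow> real \<Rightarrow> ((('u \<Rightarrow> real) \<times> ('i \<Rightarrow> bool)) \<times> ('k \<Rightarrow> bool)) measure" where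
  "sample_space U I1 q1 I2 q2 =
     (PiM U (\<lambda>_. uniform_measure lborel {0..1::real})
       \<Otimes>\<^sub>M PiM I1 (\<lambda>_. measure_pmf (bernoulli_pmf q1)))
       \<Otimes>\<^sub>M PiM I2 (\<lambda>_. measure_pmf (bernoulli_pmf q2))"

definition var :: "'a measure \<Rightarrow> ('a \<Rightarrow> real) \<Rightarrow> real" where
  "var M X = integral\<^sup>L M (\<lambda>x. (X x - integral\<^sup>L M X)\<^sup>2)"

end

theory Submission
  imports Defs
begin

text \<open>Write \<open>Z\<^sub>v = [h v < p]\<close> and \<open>A\<^sub>v\<close>, \<open>B\<^sub>v\<close> for the numbers of tuples of \<open>T\<^sub>1\<close>, \<open>T\<^sub>2\<close>
  with join value \<open>v\<close> whose coin came up heads; then \<open>|S\<^sub>1 \<bowtie> S\<^sub>2| = \<Sum>\<^sub>v Z\<^sub>v A\<^sub>v B\<^sub>v\<close>.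
  The families \<open>Z\<close>, \<open>A\<close>, \<open>B\<close> are independent of each other, and inside each family the
  members for distinct \<open>v\<close> are uncorrelated, since they are counts over disjoint sets of
  independent coordinates. Hence all cross terms cancel and
  \<open>Var = \<Sum>\<^sub>v (E Z\<^sub>v\<^sup>2 E A\<^sub>v\<^sup>2 E B\<^sub>v\<^sup>2 - (E Z\<^sub>v E A\<^sub>v E B\<^sub>v)\<^sup>2)\<close>; inserting the binomial moments
  \<open>E A\<^sub>v = q\<^sub>1 a\<^sub>v\<close>, \<open>E A\<^sub>v\<^sup>2 = q\<^sub>1\<^sup>2 a\<^sub>v\<^sup>2 + q\<^sub>1 (1 - q\<^sub>1) a\<^sub>v\<close> (and likewise for \<open>Z\<close>, \<open>B\<close>) gives the
  formula.\<close>

definition hits :: "'i set \<Rightarrow> 'a set \<Rightarrow> ('i \<Rightarrow> 'a) \<Rightarrow> nat" where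
  "hits K E x = card {i \<in> K. x i \<in> E}"

lemma hits_singleton: "hits {v} E x = (if x v \<in> E then 1 else 0)"
  by (simp add: hits_def Collect_conv_if)

lemma real_hits_eq_sum_indicator:
  "finite K \<Longrightarrow> real (hits K E x) = (\<Sum>i\<in>K. indicator E (x i))"
  by (simp add: hits_def indicator_def sum.If_cases Int_def)

lemma
  fixes N :: "'a measure" and I :: "'i set"
  assumes "prob_space N" "finite I" "S \<subseteq> I" "E \<in> sets N"
  shows integrable_PiM_prod_indicator:
      "integrable (PiM I (\<lambda>_. N)) (\<lambda>x. \<Prod>j\<in>S. indicator E (x j) :: real)"
    and integral_PiM_prod_indicator:
      "(\<integral>x. (\<Prod>j\<in>S. indicator E (x j) :: real) \<partial>PiM I (\<lambda>_. N)) = measure N E ^ card S"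
proof -
  interpret N: prob_space N by fact
  interpret product_sigma_finite "\<lambda>_. N" by unfold_locales
  define f :: "'i \<Rightarrow> 'a \<Rightarrow> real" where "f j y = (if j \<in> S then indicator E y else 1)" for j y
  have f_integrable: "integrable N (f j)" for j
    using assms(4) by (cases "j \<in> S") (simp_all add: f_def[abs_def] N.emeasure_eq_measure)
  have prod_f: "(\<Prod>j\<in>I. f j (x j)) = (\<Prod>j\<in>S. indicator E (x j))" for x
    using assms(2,3) by (simp add: f_def prod.inter_restrict[symmetric] Int_absorb1)
  show "integrable (PiM I (\<lambda>_. N)) (\<lambda>x. \<Prod>j\<in>S. indicator E (x j) :: real)"
    using product_integrable_prod[of I f] assms(2) f_integrable by (simp add: prod_f)
  have "(\<integral>x. (\<Prod>j\<in>I. f j (x j)) \<partial>PiM I (\<lambda>_. N)) = (\<Prod>j\<in>I. integral\<^sup>L N (f j))"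
    using product_integral_prod[of I f] assms(2) f_integrable by simp
  also have "\<dots> = (\<Prod>j\<in>I. if j \<in> S then measure N E else 1)"
    using assms(4) by (intro prod.cong) (simp_all add: f_def[abs_def] N.prob_space N.emeasure_eq_measure)
  also have "\<dots> = measure N E ^ card S"
    using assms(2,3) by (simp add: prod.inter_restrict[symmetric] Int_absorb1)
  finally show "(\<integral>x. (\<Prod>j\<in>S. indicator E (x j) :: real) \<partial>PiM I (\<lambda>_. N)) = measure N E ^ card S"
    by (simp add: prod_f)
qed

lemma
  fixes N :: "'a measure" and I :: "'i set"
  assumes "prob_space N" "finite I" "i \<in> I" "j \<in> I" "E \<in> sets N"
  shows integrable_PiM_indicator_mult:
      "integrable (PiM I (\<lambda>_. N)) (\<lambda>x. indicator E (x i) * indicator E (x j) :: real)"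
    and integral_PiM_indicator_mult:
      "(\<integral>x. indicator E (x i) * indicator E (x j) \<partial>PiM I (\<lambda>_. N)) =
         (measure N E)\<^sup>2 + (if i = j then measure N E * (1 - measure N E) else 0)"
proof -
  have prod_pair: "(\<Prod>k\<in>{i, j}. indicator E (x k)) = indicator E (x i) * (indicator E (x j) :: real)" for x
    by (cases "i = j") (simp_all add: indicator_def)
  show "integrable (PiM I (\<lambda>_. N)) (\<lambda>x. indicator E (x i) * indicator E (x j) :: real)"
    using integrable_PiM_prod_indicator[of N I "{i, j}" E] assms by (simp add: prod_pair)
  show "(\<integral>x. indicator E (x i) * indicator E (x j) \<partial>PiM I (\<lambda>_. N)) =
      (measure N E)\<^sup>2 + (if i = j then measure N E * (1 - measure N E) else 0)"
    using integral_PiM_prod_indicator[of N I "{i, j}" E] assms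
    by (simp add: prod_pair power2_eq_square algebra_simps)
qed

definition uncorrelated_family ::
    "'a measure \<Rightarrow> 'u set \<Rightarrow> ('u \<Rightarrow> 'a \<Rightarrow> real) \<Rightarrow> ('u \<Rightarrow> real) \<Rightarrow> ('u \<Rightarrow> real) \<Rightarrow> bool" where
  "uncorrelated_family M U Z m s \<longleftrightarrow>
     (\<forall>v\<in>U. integrable M (Z v) \<and> integral\<^sup>L M (Z v) = m v) \<and>
     (\<forall>v\<in>U. \<forall>w\<in>U. integrable M (\<lambda>x. Z v x * Z w x) \<and>
        integral\<^sup>L M (\<lambda>x. Z v x * Z w x) = m v * m w + (if v = w then s v else 0))"

lemma uncorrelated_familyD:
  assumes "uncorrelated_family M U Z m s" "v \<in> U" "w \<in> U"
  shows "integrable M (Z v)" "integral\<^sup>L M (Z v) = m v"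
    and "integrable M (\<lambda>x. Z v x * Z w x)"
    and "integral\<^sup>L M (\<lambda>x. Z v x * Z w x) = m v * m w + (if v = w then s v else 0)"
  using assms by (auto simp: uncorrelated_family_def)

lemma sum_sum_plus_diagonal:
  fixes c d :: real
  assumes "finite A" "finite B"
  shows "(\<Sum>i\<in>A. \<Sum>j\<in>B. c + (if i = j then d else 0)) = c * card A * card B + d * card (A \<inter> B)"
  using assms by (simp add: sum.distrib sum.inter_restrict[symmetric] mult_ac)

lemma uncorrelated_family_hits:
  fixes N :: "'a measure" and I :: "'i set" and K :: "'u \<Rightarrow> 'i set"
  assumes "prob_space N" "finite I" "E \<in> sets N"
    and "\<And>v. v \<in> U \<Longrightarrow> K v \<subseteq> I" "disjoint_family_on K U"
  shows "uncorrelated_family (PiM I (\<lambda>_. N)) U (\<lambda>v x. real (hits (K v) E x))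
     (\<lambda>v. measure N E * card (K v)) (\<lambda>v. measure N E * (1 - measure N E) * card (K v))"
proof -
  let ?\<mu> = "measure N E"
  have finite_K: "finite (K v)" if "v \<in> U" for v
    using finite_subset[OF assms(4)[OF that] assms(2)] .
  have indicator_integrable: "integrable (PiM I (\<lambda>_. N)) (\<lambda>x. indicator E (x i) :: real)"
    and indicator_integral: "(\<integral>x. indicator E (x i) \<partial>PiM I (\<lambda>_. N)) = ?\<mu>" if "i \<in> I" for i
    using integrable_PiM_prod_indicator[of N I "{i}" E] integral_PiM_prod_indicator[of N I "{i}" E]
      assms(1-3) that by simp_all
  show ?thesis
    unfolding uncorrelated_family_def
  proof (intro conjI ballI)
    fix v assume v: "v \<in> U"
    have hits_v: "real (hits (K v) E x) = (\<Sum>i\<in>K v. indicator E (x i))" for x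
      using finite_K[OF v] by (rule real_hits_eq_sum_indicator)
    show "integrable (PiM I (\<lambda>_. N)) (\<lambda>x. real (hits (K v) E x))"
      unfolding hits_v using assms(4)[OF v] indicator_integrable
      by (intro Bochner_Integration.integrable_sum) auto
    show "(\<integral>x. real (hits (K v) E x) \<partial>PiM I (\<lambda>_. N)) = ?\<mu> * card (K v)"
      unfolding hits_v using assms(4)[OF v] indicator_integrable indicator_integral
      by (subst Bochner_Integration.integral_sum) (auto simp: subset_eq)
    fix w assume w: "w \<in> U"
    have hits_vw: "real (hits (K v) E x) * real (hits (K w) E x) =
        (\<Sum>i\<in>K v. \<Sum>j\<in>K w. indicator E (x i) * indicator E (x j))" for x
      using finite_K v w by (simp add: real_hits_eq_sum_indicator sum_product)
    have indicator_mult_integrable: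
        "integrable (PiM I (\<lambda>_. N)) (\<lambda>x. indicator E (x i) * indicator E (x j) :: real)"
      if "i \<in> K v" "j \<in> K w" for i j
      using assms(4) v w that by (intro integrable_PiM_indicator_mult[OF assms(1,2) _ _ assms(3)]) auto
    show "integrable (PiM I (\<lambda>_. N)) (\<lambda>x. real (hits (K v) E x) * real (hits (K w) E x))"
      unfolding hits_vw using indicator_mult_integrable
      by (intro Bochner_Integration.integrable_sum) auto
    have "(\<integral>x. real (hits (K v) E x) * real (hits (K w) E x) \<partial>PiM I (\<lambda>_. N)) =
        (\<Sum>i\<in>K v. \<Sum>j\<in>K w. \<integral>x. indicator E (x i) * indicator E (x j) \<partial>PiM I (\<lambda>_. N))"
      unfolding hits_vw using indicator_mult_integrable
      by (simp add: Bochner_Integration.integral_sum Bochner_Integration.integrable_sum)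
    also have "\<dots> = (\<Sum>i\<in>K v. \<Sum>j\<in>K w. ?\<mu>\<^sup>2 + (if i = j then ?\<mu> * (1 - ?\<mu>) else 0))"
      using assms(4) v w
      by (intro sum.cong refl integral_PiM_indicator_mult[OF assms(1,2) _ _ assms(3)]) auto
    also have "\<dots> = ?\<mu>\<^sup>2 * card (K v) * card (K w) + ?\<mu> * (1 - ?\<mu>) * card (K v \<inter> K w)"
      using finite_K v w by (intro sum_sum_plus_diagonal)
    also have "\<dots> = ?\<mu> * card (K v) * (?\<mu> * card (K w)) +
        (if v = w then ?\<mu> * (1 - ?\<mu>) * card (K v) else 0)"
      using assms(5) v w by (auto simp: disjoint_family_on_def power2_eq_square)
    finally show "(\<integral>x. real (hits (K v) E x) * real (hits (K w) E x) \<partial>PiM I (\<lambda>_. N)) =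
        ?\<mu> * card (K v) * (?\<mu> * card (K w)) +
        (if v = w then ?\<mu> * (1 - ?\<mu>) * card (K v) else 0)" .
  qed
qed

lemma uncorrelated_family_hash:
  assumes "finite U" "0 \<le> p" "p \<le> 1"
  shows "uncorrelated_family (PiM U (\<lambda>_. uniform_measure lborel {0..1::real})) U
     (\<lambda>v h. real (hits {v} {..<p} h)) (\<lambda>_. p) (\<lambda>_. p * (1 - p))"
proof -
  have "{0..1} \<inter> {..<p} = {0..<p::real}"
    using assms(3) by auto
  then have "measure (uniform_measure lborel {0..1::real}) {..<p} = p"
    using assms(2) by simp
  moreover have "prob_space (uniform_measure lborel {0..1::real})"
    by (intro prob_space_uniform_measure) auto
  ultimately show ?thesis
    using uncorrelated_family_hits[of "uniform_measure lborel {0..1::real}" U "{..<p}" U "\<lambda>v. {v}"] assms(1)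
    by (simp add: disjoint_family_on_def)
qed

lemma uncorrelated_family_coins:
  assumes "finite I" "0 \<le> q" "q \<le> 1"
    and "\<And>v. v \<in> U \<Longrightarrow> K v \<subseteq> I" "disjoint_family_on K U"
  shows "uncorrelated_family (PiM I (\<lambda>_. measure_pmf (bernoulli_pmf q))) U
     (\<lambda>v c. real (hits (K v) {True} c)) (\<lambda>v. q * card (K v)) (\<lambda>v. q * (1 - q) * card (K v))"
  using uncorrelated_family_hits[of "measure_pmf (bernoulli_pmf q)" I "{True}" U K] assms
  by (simp add: measure_pmf_single prob_space_measure_pmf)

lemma (in pair_sigma_finite) integrable_product_mult:
  fixes f :: "'a \<Rightarrow> real" and g :: "'b \<Rightarrow> real"
  assumes f: "integrable M1 f" and g: "integrable M2 g"
  shows "integrable (M1 \<Otimes>\<^sub>M M2) (\<lambda>(x, y). f x * g y)"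
proof (unfold integrable_iff_bounded, intro conjI)
  have [measurable]: "f \<in> borel_measurable M1" "g \<in> borel_measurable M2"
    using f g by auto
  show "(\<lambda>(x, y). f x * g y) \<in> borel_measurable (M1 \<Otimes>\<^sub>M M2)"
    by measurable
  have "(\<integral>\<^sup>+ z. ennreal (norm (case z of (x, y) \<Rightarrow> f x * g y)) \<partial>(M1 \<Otimes>\<^sub>M M2))
      = (\<integral>\<^sup>+ x. \<integral>\<^sup>+ y. ennreal (norm (f x)) * ennreal (norm (g y)) \<partial>M2 \<partial>M1)"
    by (subst M2.nn_integral_fst[symmetric]) (auto simp: abs_mult ennreal_mult)
  also have "\<dots> = (\<integral>\<^sup>+ x. ennreal (norm (f x)) \<partial>M1) * (\<integral>\<^sup>+ y. ennreal (norm (g y)) \<partial>M2)"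
    by (simp add: nn_integral_cmult nn_integral_multc)
  also have "\<dots> < \<infinity>"
    using f g by (simp add: integrable_iff_bounded ennreal_mult_less_top)
  finally show "(\<integral>\<^sup>+ z. ennreal (norm (case z of (x, y) \<Rightarrow> f x * g y)) \<partial>(M1 \<Otimes>\<^sub>M M2)) < \<infinity>" .
qed

lemma (in pair_sigma_finite) integral_product_mult:
  fixes f :: "'a \<Rightarrow> real" and g :: "'b \<Rightarrow> real"
  assumes "integrable M1 f" "integrable M2 g"
  shows "integral\<^sup>L (M1 \<Otimes>\<^sub>M M2) (\<lambda>(x, y). f x * g y) = integral\<^sup>L M1 f * integral\<^sup>L M2 g"
  using integral_fst[OF integrable_product_mult[OF assms]] by simp

lemma
  fixes N :: "'a measure" and P :: "'b measure" and Q :: "'c measure"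
    and f :: "'a \<Rightarrow> real" and g :: "'b \<Rightarrow> real" and h :: "'c \<Rightarrow> real"
  assumes "prob_space N" "prob_space P" "prob_space Q"
    and "integrable N f" "integrable P g" "integrable Q h"
  shows integrable_triple_product_mult:
      "integrable ((N \<Otimes>\<^sub>M P) \<Otimes>\<^sub>M Q) (\<lambda>((x, y), z). f x * g y * h z)"
    and integral_triple_product_mult:
      "integral\<^sup>L ((N \<Otimes>\<^sub>M P) \<Otimes>\<^sub>M Q) (\<lambda>((x, y), z). f x * g y * h z) =
         integral\<^sup>L N f * integral\<^sup>L P g * integral\<^sup>L Q h"
proof -
  interpret NP: pair_sigma_finite N P
    using assms(1,2) by (intro pair_sigma_finite.intro prob_space_imp_sigma_finite)
  interpret NPQ: pair_sigma_finite "N \<Otimes>\<^sub>M P" Q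
    using assms(1-3) by (intro pair_sigma_finite.intro prob_space_imp_sigma_finite prob_space_pair)
  have split: "(\<lambda>((x, y), z). f x * g y * h z) = (\<lambda>(xy, z). (case xy of (x, y) \<Rightarrow> f x * g y) * h z)"
    by auto
  show "integrable ((N \<Otimes>\<^sub>M P) \<Otimes>\<^sub>M Q) (\<lambda>((x, y), z). f x * g y * h z)"
    unfolding split by (rule NPQ.integrable_product_mult[OF NP.integrable_product_mult[OF assms(4,5)] assms(6)])
  show "integral\<^sup>L ((N \<Otimes>\<^sub>M P) \<Otimes>\<^sub>M Q) (\<lambda>((x, y), z). f x * g y * h z) =
      integral\<^sup>L N f * integral\<^sup>L P g * integral\<^sup>L Q h"
    unfolding split NPQ.integral_product_mult[OF NP.integrable_product_mult[OF assms(4,5)] assms(6)]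
      NP.integral_product_mult[OF assms(4,5)] ..
qed

lemma var_mult_const: "var M (\<lambda>x. c * X x) = c\<^sup>2 * var M X"
  by (simp add: var_def power_mult_distrib right_diff_distrib[symmetric])

lemma var_sum_products_uncorrelated:
  fixes N :: "'a measure" and P :: "'b measure" and Q :: "'c measure"
  assumes "prob_space N" "prob_space P" "prob_space Q" "finite U"
    and Z: "uncorrelated_family N U Z mZ sZ"
    and A: "uncorrelated_family P U A mA sA"
    and B: "uncorrelated_family Q U B mB sB"
  shows "var ((N \<Otimes>\<^sub>M P) \<Otimes>\<^sub>M Q) (\<lambda>((x, y), z). \<Sum>v\<in>U. Z v x * A v y * B v z) =
    (\<Sum>v\<in>U. ((mZ v)\<^sup>2 + sZ v) * ((mA v)\<^sup>2 + sA v) * ((mB v)\<^sup>2 + sB v) - (mZ v * mA v * mB v)\<^sup>2)"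
    (is "var ?M ?X = _")
proof -
  interpret M: prob_space ?M
    using assms(1-3) by (intro prob_space_pair)
  note triple = integrable_triple_product_mult[OF assms(1-3)] integral_triple_product_mult[OF assms(1-3)]
  have X_sq: "(?X \<omega>)\<^sup>2 = (\<Sum>v\<in>U. \<Sum>w\<in>U. (\<lambda>((x, y), z).
      (Z v x * Z w x) * (A v y * A w y) * (B v z * B w z)) \<omega>)" for \<omega>
    by (simp add: power2_eq_square sum_product case_prod_unfold algebra_simps)
  have X_sum: "?X \<omega> = (\<Sum>v\<in>U. (\<lambda>((x, y), z). Z v x * A v y * B v z) \<omega>)" for \<omega>
    by (simp add: case_prod_unfold)
  note Z' = uncorrelated_familyD[OF Z] and A' = uncorrelated_familyD[OF A]
    and B' = uncorrelated_familyD[OF B]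
  have X_integrable: "integrable ?M ?X"
    unfolding X_sum using Z' A' B' by (intro Bochner_Integration.integrable_sum triple(1)) auto
  have X_sq_integrable: "integrable ?M (\<lambda>\<omega>. (?X \<omega>)\<^sup>2)"
    unfolding X_sq using Z' A' B' by (intro Bochner_Integration.integrable_sum triple(1)) auto
  have X_expectation: "integral\<^sup>L ?M ?X = (\<Sum>v\<in>U. mZ v * mA v * mB v)"
    unfolding X_sum using Z' A' B' by (simp add: Bochner_Integration.integral_sum triple)
  have X_sq_expectation: "integral\<^sup>L ?M (\<lambda>\<omega>. (?X \<omega>)\<^sup>2) = (\<Sum>v\<in>U. \<Sum>w\<in>U.
      (mZ v * mZ w + (if v = w then sZ v else 0)) * (mA v * mA w + (if v = w then sA v else 0)) *
      (mB v * mB w + (if v = w then sB v else 0)))"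
    unfolding X_sq using Z' A' B'
    by (simp add: Bochner_Integration.integral_sum Bochner_Integration.integrable_sum triple)
  have moment_product: "(mZ v * mZ w + (if v = w then sZ v else 0))
      * (mA v * mA w + (if v = w then sA v else 0)) * (mB v * mB w + (if v = w then sB v else 0))
    = (mZ v * mA v * mB v) * (mZ w * mA w * mB w) + (if v = w then ((mZ v)\<^sup>2 + sZ v)
      * ((mA v)\<^sup>2 + sA v) * ((mB v)\<^sup>2 + sB v) - (mZ v * mA v * mB v)\<^sup>2 else 0)"
    for v w by (cases "v = w") (simp_all add: power2_eq_square algebra_simps)
  have "var ?M ?X = integral\<^sup>L ?M (\<lambda>\<omega>. (?X \<omega>)\<^sup>2) - (integral\<^sup>L ?M ?X)\<^sup>2"
    unfolding var_def using X_integrable X_sq_integrable by (rule M.variance_eq)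
  then show ?thesis
    unfolding X_sq_expectation X_expectation moment_product
    using assms(4) by (simp add: sum.distrib power2_eq_square sum_product)
qed

lemma card_join_UBS:
  assumes "finite U" "finite I1" "finite I2"
    and "\<forall>i\<in>I1. J (T1 i) \<in> U" "\<forall>k\<in>I2. J (T2 k) \<in> U"
  shows "card (join (UBS p h c1 I1 T1 J) T1 (UBS p h c2 I2 T2 J) T2 J) =
    (\<Sum>v\<in>U. hits {v} {..<p} h * hits {i \<in> I1. J (T1 i) = v} {True} c1
      * hits {k \<in> I2. J (T2 k) = v} {True} c2)"
proof -
  let ?A = "\<lambda>v. {i \<in> I1. J (T1 i) = v \<and> c1 i}"
  let ?B = "\<lambda>v. {k \<in> I2. J (T2 k) = v \<and> c2 k}"
  have "join (UBS p h c1 I1 T1 J) T1 (UBS p h c2 I2 T2 J) T2 J = (\<Union>v\<in>{v \<in> U. h v < p}. ?A v \<times> ?B v)"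
    using assms(4,5) by (auto simp: join_def UBS_def)
  then have "card (join (UBS p h c1 I1 T1 J) T1 (UBS p h c2 I2 T2 J) T2 J) =
      (\<Sum>v\<in>{v \<in> U. h v < p}. card (?A v) * card (?B v))"
    using assms(1-3) by (simp add: card_UN_disjoint disjoint_iff card_cartesian_product)
  also have "\<dots> = (\<Sum>v\<in>U. (if h v < p then 1 else 0) * card (?A v) * card (?B v))"
    using assms(1) by (subst sum.inter_filter) (auto intro!: sum.cong)
  also have "\<dots> = (\<Sum>v\<in>U. hits {v} {..<p} h * hits {i \<in> I1. J (T1 i) = v} {True} c1
      * hits {k \<in> I2. J (T2 k) = v} {True} c2)"
    by (intro sum.cong refl) (simp only: hits_singleton, simp add: hits_def conj_ac)
  finally show ?thesis .
qed

theorem theorem4: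
  fixes U :: "'u set" and J :: "'t \<Rightarrow> 'u"
    and I1 :: "'i set" and T1 :: "'i \<Rightarrow> 't"
    and I2 :: "'k set" and T2 :: "'k \<Rightarrow> 't"
    and \<epsilon>1 \<epsilon>2 p :: real
  assumes "finite U" "finite I1" "finite I2"
    and "\<forall>i\<in>I1. J (T1 i) \<in> U" "\<forall>k\<in>I2. J (T2 k) \<in> U"
    and "0 < \<epsilon>1" "\<epsilon>1 \<le> 1" "0 < \<epsilon>2" "\<epsilon>2 \<le> 1"
    and "max \<epsilon>1 \<epsilon>2 \<le> p" "p \<le> 1"
  shows
    "let a = freq I1 T1 J; b = freq I2 T2 J;
         \<gamma> = (\<lambda>(m::nat) (n::nat). \<Sum>v\<in>U. real (a v) ^ m * real (b v) ^ n);
         M = sample_space U I1 (\<epsilon>1 / p) I2 (\<epsilon>2 / p);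
         Jcount = (\<lambda>((h, c1), c2).
            p / (\<epsilon>1 * \<epsilon>2) * real (card (join (UBS p h c1 I1 T1 J) T1 (UBS p h c2 I2 T2 J) T2 J)))
     in var M Jcount =
          (1 / p - 1) * \<gamma> 2 2 + (1 / \<epsilon>2 - 1 / p) * \<gamma> 2 1 + (1 / \<epsilon>1 - 1 / p) * \<gamma> 1 2
          + (p / (\<epsilon>1 * \<epsilon>2) - 1 / \<epsilon>1 - 1 / \<epsilon>2 + 1 / p) * \<gamma> 1 1"
proof -
  let ?K1 = "\<lambda>v. {i \<in> I1. J (T1 i) = v}" and ?K2 = "\<lambda>v. {k \<in> I2. J (T2 k) = v}"
  let ?a = "\<lambda>v. real (card (?K1 v))" and ?b = "\<lambda>v. real (card (?K2 v))"
  let ?q1 = "\<epsilon>1 / p" and ?q2 = "\<epsilon>2 / p"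
  have p: "0 < p" "p \<le> 1" and q1: "0 \<le> ?q1" "?q1 \<le> 1" and q2: "0 \<le> ?q2" "?q2 \<le> 1"
    using assms(6-11) by auto
  have disjoint: "disjoint_family_on ?K1 U" "disjoint_family_on ?K2 U"
    by (auto simp: disjoint_family_on_def)
  have Jcount_eq: "(\<lambda>((h, c1), c2). p / (\<epsilon>1 * \<epsilon>2)
        * real (card (join (UBS p h c1 I1 T1 J) T1 (UBS p h c2 I2 T2 J) T2 J)))
    = (\<lambda>\<omega>. p / (\<epsilon>1 * \<epsilon>2) * (\<lambda>((h, c1), c2). \<Sum>v\<in>U.
        real (hits {v} {..<p} h) * real (hits (?K1 v) {True} c1) * real (hits (?K2 v) {True} c2)) \<omega>)"
    by (auto simp: card_join_UBS[of U I1 I2 J T1 T2, OF assms(1-5)])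
  have var_sum: "var (sample_space U I1 ?q1 I2 ?q2) (\<lambda>((h, c1), c2). \<Sum>v\<in>U.
        real (hits {v} {..<p} h) * real (hits (?K1 v) {True} c1) * real (hits (?K2 v) {True} c2))
    = (\<Sum>v\<in>U. (p\<^sup>2 + p * (1 - p)) * ((?q1 * ?a v)\<^sup>2 + ?q1 * (1 - ?q1) * ?a v)
        * ((?q2 * ?b v)\<^sup>2 + ?q2 * (1 - ?q2) * ?b v) - (p * (?q1 * ?a v) * (?q2 * ?b v))\<^sup>2)"
    unfolding sample_space_def
    by (intro var_sum_products_uncorrelated uncorrelated_family_hash uncorrelated_family_coins
        prob_space_PiM prob_space_uniform_measure prob_space_measure_pmf assms(1-3) q1 q2 disjoint)
      (auto simp: less_imp_le[OF p(1)] p(2))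
  have per_key: "(p / (\<epsilon>1 * \<epsilon>2))\<^sup>2 * ((p\<^sup>2 + p * (1 - p)) * ((?q1 * a)\<^sup>2 + ?q1 * (1 - ?q1) * a)
        * ((?q2 * b)\<^sup>2 + ?q2 * (1 - ?q2) * b) - (p * (?q1 * a) * (?q2 * b))\<^sup>2)
      = (1 / p - 1) * (a ^ 2 * b ^ 2) + (1 / \<epsilon>2 - 1 / p) * (a ^ 2 * b ^ 1)
        + (1 / \<epsilon>1 - 1 / p) * (a ^ 1 * b ^ 2)
        + (p / (\<epsilon>1 * \<epsilon>2) - 1 / \<epsilon>1 - 1 / \<epsilon>2 + 1 / p) * (a ^ 1 * b ^ 1)" for a b :: real
    using p(1) assms(6,8) by (simp add: field_simps power2_eq_square)
  show ?thesis
    unfolding Let_def freq_def Jcount_eq var_mult_const var_sum sum_distrib_left per_key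
    by (simp add: sum.distrib sum_distrib_left)
qed

end
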